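(* Let $p\in(0,1)$. For $n\ge1$ let $D_n$ be the random subset of an $n\times n$ square of $\mathbb{Z}^2$ obtained by keeping each vertex independently with probability $p$. Then there exists a constant $\alpha_p>0$ such that $\mathbb{E}\left[\ell_{\mathrm{TS}}(D_n)\right]/n^2\to\alpha_p$ as $n\to\infty$.
   Context: For a finite set $V\subseteq\mathbb{Z}^2$, $\ell_{\mathrm{TS}}(V)$ is the length of a shortest path in the standard Cayley graph of $\mathbb{Z}^2$ (generators $e_1,e_2$) visiting every point of $V$, with starting and ending points not prescribed ($\ell_{\mathrm{TS}}(\emptyset)=0$). *)

theory Defs
  imports "HOL-Probability.Probability"
begin

definition grid_adj :: "int \<times> int \<Rightarrow> int \<times> int \<Rightarrow> bool" where
  "grid_adj u v \<longleftrightarrow> \<bar>fst u - fst v\<bar> + \<bar>snd u - snd v\<bar> = 1"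

definition grid_walk :: "(int \<times> int) list \<Rightarrow> bool" where
  "grid_walk w \<longleftrightarrow> w \<noteq> [] \<and> (\<forall>i. Suc i < length w \<longrightarrow> grid_adj (w ! i) (w ! Suc i))"

definition walk_length :: "(int \<times> int) list \<Rightarrow> nat" where
  "walk_length w = length w - 1"

text \<open>Travelling salesman length: shortest walk visiting every point of V,
  free endpoints; 0 for the empty set.\<close>
definition l_TS :: "(int \<times> int) set \<Rightarrow> nat" where
  "l_TS V = (if V = {} then 0
     else (LEAST k. \<exists>w. grid_walk w \<and> V \<subseteq> set w \<and> walk_length w = k))"

definition square :: "nat \<Rightarrow> (int \<times> int) set" where
  "square n = {0..<int n} \<times> {0..<int n}"

definition perc :: "real \<Rightarrow> nat \<Rightarrow> (int \<times> int \<Rightarrow> bool) pmf" where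
  "perc p n = Pi_pmf (square n) False (\<lambda>_. bernoulli_pmf p)"

definition D_set :: "nat \<Rightarrow> (int \<times> int \<Rightarrow> bool) \<Rightarrow> (int \<times> int) set" where
  "D_set n \<omega> = {x \<in> square n. \<omega> x}"

end

theory Submission
  imports Defs
begin

(* A tour of D_{kn} can be assembled from optimal tours of the k^2 translated n x n tiles of the
   kn-square, visited in boustrophedon order, joined by connecting paths of length at most 3n.
   Since l_TS is translation invariant, E(kn) <= k^2 (E(n) + 3n) for E(n) = E[l_TS(D_n)].
   Together with monotonicity of E and k = ceil(N/n) this gives
   E(N)/N^2 <= (1 + n/N)^2 (E(n)/n^2 + 3/n), which forces E(N)/N^2 to converge to
   inf_n (E(n)/n^2 + 3/n).  The limit is at least p: a walk through the points of D_n has at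
   least |D_n| - 1 edges, and E|D_n| = p n^2. *)

definition grid_dist :: "int \<times> int \<Rightarrow> int \<times> int \<Rightarrow> nat" where
  "grid_dist u v = nat (\<bar>fst u - fst v\<bar> + \<bar>snd u - snd v\<bar>)"

lemma grid_adj_sym: "grid_adj u v \<longleftrightarrow> grid_adj v u"
  unfolding grid_adj_def by linarith

lemma grid_walk_iff_successively: "grid_walk w \<longleftrightarrow> w \<noteq> [] \<and> successively grid_adj w"
  by (simp add: grid_walk_def successively_conv_nth)

lemma grid_walk_nonempty: "grid_walk w \<Longrightarrow> w \<noteq> []"
  by (simp add: grid_walk_def)

lemma grid_walk_singleton [simp]: "grid_walk [x]"
  by (simp add: grid_walk_def)

lemma grid_walk_rev [simp]: "grid_walk (rev w) \<longleftrightarrow> grid_walk w"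
proof -
  have sym: "(\<lambda>x y. grid_adj y x) = grid_adj" by (intro ext) (simp add: grid_adj_sym)
  show ?thesis unfolding grid_walk_iff_successively successively_rev sym by simp
qed

lemma grid_walk_tl: "grid_walk w \<Longrightarrow> tl w \<noteq> [] \<Longrightarrow> grid_walk (tl w)"
  by (cases w) (auto simp: grid_walk_iff_successively successively_Cons)

definition walk_join :: "'a list \<Rightarrow> 'a list \<Rightarrow> 'a list" where
  "walk_join w u = w @ tl u"

lemma
  assumes "w \<noteq> []" "u \<noteq> []" "last w = hd u"
  shows set_walk_join: "set (walk_join w u) = set w \<union> set u"
    and last_walk_join: "last (walk_join w u) = last u"
    and walk_length_walk_join: "walk_length (walk_join w u) = walk_length w + walk_length u"
proof -
  obtain us where u: "u = last w # us" using assms by (cases u) auto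
  show "set (walk_join w u) = set w \<union> set u" "last (walk_join w u) = last u"
      "walk_length (walk_join w u) = walk_length w + walk_length u"
    using assms(1) by (auto simp: u walk_join_def walk_length_def Suc_leI)
qed

lemma grid_walk_walk_join:
  assumes "grid_walk w" "grid_walk u" "last w = hd u"
  shows "grid_walk (walk_join w u)"
proof -
  have "walk_join w u = butlast w @ u"
    using assms by (cases u; cases w rule: rev_cases) (auto simp: walk_join_def grid_walk_iff_successively)
  with assms show ?thesis
    by (cases w rule: rev_cases)
       (auto simp: grid_walk_iff_successively successively_append_iff)
qed

lemma grid_walk_between:
  "\<exists>w. grid_walk w \<and> hd w = a \<and> last w = b \<and> walk_length w = grid_dist a b"
proof (induction "grid_dist a b" arbitrary: a)
  case 0
  then have "a = b" by (auto simp: grid_dist_def prod_eq_iff)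
  then show ?case by (intro exI[of _ "[a]"]) (simp add: walk_length_def grid_walk_def grid_dist_def)
next
  case (Suc d)
  define a' where "a' = (if fst a \<noteq> fst b then (fst a + sgn (fst b - fst a), snd a)
                         else (fst a, snd a + sgn (snd b - snd a)))"
  have step: "grid_adj a a'" and dist: "d = grid_dist a' b"
    using Suc.hyps(2) by (auto simp: a'_def grid_adj_def grid_dist_def sgn_if)
  with Suc.hyps(1) obtain w where "grid_walk w" "hd w = a'" "last w = b" "walk_length w = d"
    by metis
  with step dist Suc.hyps(2) show ?case
    by (intro exI[of _ "a # w"])
       (cases w; auto simp: walk_length_def grid_walk_iff_successively successively_Cons)
qed

lemma grid_walk_link:
  assumes "grid_walk w" "grid_walk u"
  obtains v where "grid_walk v" "last v = last u" "set w \<union> set u \<subseteq> set v"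
    "walk_length v = walk_length w + grid_dist (last w) (hd u) + walk_length u"
proof -
  obtain c where c: "grid_walk c" "hd c = last w" "last c = hd u"
    "walk_length c = grid_dist (last w) (hd u)"
    using grid_walk_between by blast
  have ne: "w \<noteq> []" "u \<noteq> []" "c \<noteq> []" using assms c(1) grid_walk_nonempty by auto
  have wc: "grid_walk (walk_join w c)" "walk_join w c \<noteq> []" "last (walk_join w c) = hd u"
    using grid_walk_walk_join[OF assms(1) c(1) c(2)[symmetric]] grid_walk_nonempty
      last_walk_join[OF ne(1,3) c(2)[symmetric]] c(3) by auto
  show ?thesis
  proof
    show "grid_walk (walk_join (walk_join w c) u)"
      using grid_walk_walk_join[OF wc(1) assms(2) wc(3)] .
  qed (use ne c wc in \<open>auto simp: set_walk_join last_walk_join walk_length_walk_join\<close>)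
qed

lemma l_TS_le: "grid_walk w \<Longrightarrow> V \<subseteq> set w \<Longrightarrow> l_TS V \<le> walk_length w"
  unfolding l_TS_def by (auto intro: Least_le)

lemma finite_imp_covering_walk:
  assumes "finite V"
  shows "\<exists>w. grid_walk w \<and> V \<subseteq> set w"
  using assms
proof (induction rule: finite_induct)
  case empty
  show ?case using grid_walk_singleton by blast
next
  case (insert x V)
  then obtain w where "grid_walk w" "V \<subseteq> set w" by blast
  then obtain v where "grid_walk v" "set w \<union> set [x] \<subseteq> set v"
    using grid_walk_link[of w "[x]"] by auto
  with \<open>V \<subseteq> set w\<close> show ?case by auto
qed

lemma l_TS_attained:
  assumes "finite V"
  obtains w where "grid_walk w" "V \<subseteq> set w" "walk_length w = l_TS V"
proof (cases "V = {}")
  case True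
  then show ?thesis using that[of "[(0, 0)]"] by (simp add: l_TS_def walk_length_def)
next
  case False
  have "\<exists>k w. grid_walk w \<and> V \<subseteq> set w \<and> walk_length w = k"
    using finite_imp_covering_walk[OF assms] by blast
  from LeastI_ex[OF this] False show ?thesis using that unfolding l_TS_def by auto
qed

lemma hd_optimal_walk_in:
  assumes w: "grid_walk w" "V \<subseteq> set w" "walk_length w = l_TS V" and "V \<noteq> {}"
  shows "hd w \<in> V"
proof (rule ccontr)
  assume hd: "hd w \<notin> V"
  obtain x w' where w': "w = x # w'" using grid_walk_nonempty[OF w(1)] by (cases w) auto
  with hd w(2) \<open>V \<noteq> {}\<close> have "w' \<noteq> []" "V \<subseteq> set w'" by auto
  moreover have "grid_walk w'" using grid_walk_tl[OF w(1)] \<open>w' \<noteq> []\<close> by (simp add: w')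
  ultimately have "l_TS V \<le> walk_length w'" by (intro l_TS_le)
  with w(3) \<open>w' \<noteq> []\<close> show False by (cases w') (simp_all add: w' walk_length_def)
qed

lemma optimal_walk_ends_in:
  assumes "finite V" "V \<subseteq> B" "B \<noteq> {}"
  obtains w where "grid_walk w" "V \<subseteq> set w" "walk_length w = l_TS V" "hd w \<in> B" "last w \<in> B"
proof (cases "V = {}")
  case True
  obtain b where "b \<in> B" using assms(3) by blast
  with True show ?thesis using that[of "[b]"] by (simp add: l_TS_def walk_length_def)
next
  case False
  obtain w where w: "grid_walk w" "V \<subseteq> set w" "walk_length w = l_TS V"
    using l_TS_attained[OF assms(1)] .
  then have "grid_walk (rev w)" "V \<subseteq> set (rev w)" "walk_length (rev w) = l_TS V"
    by (auto simp: walk_length_def)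
  from hd_optimal_walk_in[OF w False] hd_optimal_walk_in[OF this False]
  have "hd w \<in> V" "hd (rev w) \<in> V" .
  with assms(2) grid_walk_nonempty[OF w(1)] show ?thesis
    by (intro that[OF w]) (auto simp: hd_rev)
qed

lemma l_TS_mono: "V \<subseteq> W \<Longrightarrow> finite W \<Longrightarrow> l_TS V \<le> l_TS W"
  by (metis l_TS_attained l_TS_le order_trans)

lemma l_TS_translate:
  assumes "finite V"
  shows "l_TS ((\<lambda>x. x + t) ` V) = l_TS V"
proof -
  have le: "l_TS ((\<lambda>x. x + t) ` V) \<le> l_TS V" if fin: "finite V" for V and t :: "int \<times> int"
  proof -
    obtain w where w: "grid_walk w" "V \<subseteq> set w" "walk_length w = l_TS V"
      using l_TS_attained[OF fin] .
    have "grid_walk (map (\<lambda>x. x + t) w)"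
      using w(1) by (auto simp: grid_walk_def grid_adj_def)
    with w show ?thesis
      using l_TS_le[of "map (\<lambda>x. x + t) w" "(\<lambda>x. x + t) ` V"] by (auto simp: walk_length_def)
  qed
  have "V = (\<lambda>x. x + - t) ` (\<lambda>x. x + t) ` V" by (auto simp: image_image)
  then have "l_TS V \<le> l_TS ((\<lambda>x. x + t) ` V)"
    using le[of "(\<lambda>x. x + t) ` V" "- t"] assms by simp
  with le[of V t] assms show ?thesis by simp
qed

lemma card_le_l_TS:
  assumes "finite V"
  shows "card V \<le> l_TS V + 1"
proof -
  obtain w where w: "grid_walk w" "V \<subseteq> set w" "walk_length w = l_TS V"
    using l_TS_attained[OF assms] .
  have "card V \<le> length w"
    using card_mono[OF _ w(2)] card_length[of w] by simp
  with w show ?thesis by (simp add: walk_length_def)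
qed

lemma walk_through_blocks:
  assumes "finite V" "\<And>i. i \<le> m \<Longrightarrow> B i \<noteq> {}"
    and "\<And>i x y. i < m \<Longrightarrow> x \<in> B i \<Longrightarrow> y \<in> B (Suc i) \<Longrightarrow> grid_dist x y \<le> D"
  shows "\<exists>w. grid_walk w \<and> V \<inter> (\<Union>i\<le>m. B i) \<subseteq> set w \<and> last w \<in> B m \<and>
           walk_length w \<le> (\<Sum>i\<le>m. l_TS (V \<inter> B i)) + m * D"
  using assms(2,3)
proof (induction m)
  case 0
  obtain w where "grid_walk w" "V \<inter> B 0 \<subseteq> set w" "walk_length w = l_TS (V \<inter> B 0)"
    "hd w \<in> B 0" "last w \<in> B 0"
    by (rule optimal_walk_ends_in[of "V \<inter> B 0" "B 0"]) (use assms(1) "0.prems"(1) in auto)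
  then show ?case by auto
next
  case (Suc m)
  have "\<exists>w. grid_walk w \<and> V \<inter> (\<Union>i\<le>m. B i) \<subseteq> set w \<and> last w \<in> B m \<and>
           walk_length w \<le> (\<Sum>i\<le>m. l_TS (V \<inter> B i)) + m * D"
  proof (rule Suc.IH)
    show "B i \<noteq> {}" if "i \<le> m" for i
      using Suc.prems(1)[of i] that by simp
    show "grid_dist x y \<le> D" if "i < m" "x \<in> B i" "y \<in> B (Suc i)" for i x y
      using Suc.prems(2)[of i x y] that by simp
  qed
  then obtain w where w: "grid_walk w" "V \<inter> (\<Union>i\<le>m. B i) \<subseteq> set w" "last w \<in> B m"
    "walk_length w \<le> (\<Sum>i\<le>m. l_TS (V \<inter> B i)) + m * D"
    by blast
  obtain u where u: "grid_walk u" "V \<inter> B (Suc m) \<subseteq> set u"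
    "walk_length u = l_TS (V \<inter> B (Suc m))" "hd u \<in> B (Suc m)" "last u \<in> B (Suc m)"
    by (rule optimal_walk_ends_in[of "V \<inter> B (Suc m)" "B (Suc m)"])
      (use assms(1) Suc.prems(1) in auto)
  obtain v where v: "grid_walk v" "last v = last u" "set w \<union> set u \<subseteq> set v"
    "walk_length v = walk_length w + grid_dist (last w) (hd u) + walk_length u"
    by (rule grid_walk_link[OF w(1) u(1)])
  have "grid_dist (last w) (hd u) \<le> D" using Suc.prems(2)[of m] w(3) u(4) by simp
  with v(4) w(4) u(3) have "walk_length v \<le> (\<Sum>i\<le>Suc m. l_TS (V \<inter> B i)) + Suc m * D"
    by simp
  moreover have "V \<inter> (\<Union>i\<le>Suc m. B i) \<subseteq> set v"
    using w(2) u(2) v(3) by (auto simp: atMost_Suc)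
  ultimately show ?case using v(1,2) u(5) by (intro exI[of _ v]) simp
qed

lemma l_TS_le_blocks:
  assumes "finite V" "V \<subseteq> (\<Union>i\<le>m. B i)" "\<And>i. i \<le> m \<Longrightarrow> B i \<noteq> {}"
    and "\<And>i x y. i < m \<Longrightarrow> x \<in> B i \<Longrightarrow> y \<in> B (Suc i) \<Longrightarrow> grid_dist x y \<le> D"
  shows "l_TS V \<le> (\<Sum>i\<le>m. l_TS (V \<inter> B i)) + m * D"
proof -
  have "\<exists>w. grid_walk w \<and> V \<inter> (\<Union>i\<le>m. B i) \<subseteq> set w \<and> last w \<in> B m \<and>
           walk_length w \<le> (\<Sum>i\<le>m. l_TS (V \<inter> B i)) + m * D"
    by (rule walk_through_blocks) (fact assms)+
  then obtain w where w: "grid_walk w" "V \<inter> (\<Union>i\<le>m. B i) \<subseteq> set w"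
    "walk_length w \<le> (\<Sum>i\<le>m. l_TS (V \<inter> B i)) + m * D"
    by blast
  from assms(2) w(2) have "V \<subseteq> set w" by blast
  from l_TS_le[OF w(1) this] w(3) show ?thesis by (rule order_trans)
qed

definition snake :: "nat \<Rightarrow> nat \<Rightarrow> int \<times> int" where
  "snake k t = (int (t div k), int (if even (t div k) then t mod k else k - 1 - t mod k))"

lemma snake_adj:
  assumes "0 < k"
  shows "grid_adj (snake k t) (snake k (Suc t))"
proof (cases "Suc (t mod k) = k")
  case True
  then have "Suc t mod k = 0" "Suc t div k = Suc (t div k)" by (simp_all add: mod_Suc div_Suc)
  with True show ?thesis by (auto simp: snake_def grid_adj_def)
next
  case False
  with assms have "Suc (t mod k) < k" using mod_less_divisor[of k t] by linarith
  with False have "Suc t mod k = Suc (t mod k)" "Suc t div k = t div k"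
    by (simp_all add: mod_Suc div_Suc)
  with \<open>Suc (t mod k) < k\<close> show ?thesis by (auto simp: snake_def grid_adj_def)
qed

lemma snake_in_square:
  assumes "t < k * k"
  shows "snake k t \<in> square k"
proof -
  have "0 < k" using assms by (cases k) auto
  with assms show ?thesis by (auto simp: snake_def square_def less_mult_imp_div_less)
qed

lemma square_subset_snake_image: "square k \<subseteq> snake k ` {..<k * k}"
proof
  fix c assume "c \<in> square k"
  then obtain r j where c: "c = (int r, int j)" "r < k" "j < k"
    by (cases c) (auto simp: square_def, metis nat_0_le nat_less_iff)
  define m where "m = (if even r then j else k - 1 - j)"
  define t where "t = r * k + m"
  have "m < k" using c by (auto simp: m_def)
  then have "t div k = r" "t mod k = m" by (auto simp: t_def)
  have "t < Suc r * k" using \<open>m < k\<close> by (simp add: t_def)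
  also have "\<dots> \<le> k * k" using \<open>r < k\<close> by (intro mult_le_mono1) simp
  finally have "t < k * k" .
  with \<open>t div k = r\<close> \<open>t mod k = m\<close> m_def show "c \<in> snake k ` {..<k * k}"
    using c by (auto simp: snake_def image_iff intro!: bexI[of _ t])
qed

lemma finite_square [simp]: "finite (square n)"
  by (simp add: square_def)

definition tile :: "nat \<Rightarrow> int \<times> int \<Rightarrow> (int \<times> int) set" where
  "tile n c = (\<lambda>x. x + (int n * fst c, int n * snd c)) ` square n"

lemma mem_tile:
  "x \<in> tile n c \<longleftrightarrow> int n * fst c \<le> fst x \<and> fst x < int n * fst c + int n \<and>
                     int n * snd c \<le> snd x \<and> snd x < int n * snd c + int n"
proof -
  have "x \<in> tile n c \<longleftrightarrow> x - (int n * fst c, int n * snd c) \<in> square n"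
    unfolding tile_def by (auto simp: image_iff intro: bexI[of _ "x - (int n * fst c, int n * snd c)"])
  then show ?thesis by (cases x) (auto simp: square_def)
qed

lemma tile_nonempty: "0 < n \<Longrightarrow> tile n c \<noteq> {}"
  by (simp add: tile_def square_def)

lemma tile_subset_square:
  assumes "c \<in> square k"
  shows "tile n c \<subseteq> square (k * n)"
proof
  fix x assume "x \<in> tile n c"
  moreover have "int n * fst c + int n \<le> int (k * n)" "int n * snd c + int n \<le> int (k * n)"
    using assms mult_left_mono[of "_ + 1" "int k" "int n"]
    by (auto simp: square_def algebra_simps)
  moreover have "0 \<le> int n * fst c" "0 \<le> int n * snd c" using assms by (auto simp: square_def)
  ultimately show "x \<in> square (k * n)" by (cases x) (auto simp: mem_tile square_def)
qed

lemma square_subset_tiles: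
  assumes "0 < n"
  shows "square (k * n) \<subseteq> (\<Union>c\<in>square k. tile n c)"
proof
  fix x assume x: "x \<in> square (k * n)"
  have bounds: "int n * (a div int n) \<le> a \<and> a < int n * (a div int n) + int n" for a
    using mult_div_mod_eq[of "int n" a] pos_mod_bound[of "int n" a] pos_mod_sign[of "int n" a] assms
    by linarith
  define c where "c = (fst x div int n, snd x div int n)"
  have "x \<in> tile n c" using bounds by (simp add: mem_tile c_def)
  moreover have "a div int n < int k" if "a < int (k * n)" for a
  proof -
    have "int (k * n) = int n * int k" by simp
    with bounds[of a] that have "int n * (a div int n) < int n * int k" by linarith
    with assms show ?thesis by (simp add: mult_less_cancel_left_pos)
  qed
  then have "c \<in> square k"
    using x assms by (auto simp: c_def square_def pos_imp_zdiv_nonneg_iff)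
  ultimately show "x \<in> (\<Union>c\<in>square k. tile n c)" by blast
qed

lemma grid_dist_adjacent_tiles:
  assumes "grid_adj c c'" "x \<in> tile n c" "y \<in> tile n c'"
  shows "grid_dist x y \<le> 3 * n"
proof -
  have coord: "\<bar>a - b\<bar> \<le> int n * \<bar>i - j\<bar> + int n"
    if "int n * i \<le> a" "a < int n * i + int n" "int n * j \<le> b" "b < int n * j + int n" for a b i j
  proof -
    have "int n * (i - j) \<le> int n * \<bar>i - j\<bar>" "int n * (j - i) \<le> int n * \<bar>i - j\<bar>"
      by (simp_all add: mult_left_mono)
    with that show ?thesis by (simp add: algebra_simps abs_le_iff)
  qed
  have "\<bar>fst x - fst y\<bar> + \<bar>snd x - snd y\<bar> \<le> int n * (\<bar>fst c - fst c'\<bar> + \<bar>snd c - snd c'\<bar>) + 2 * int n"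
    using coord[of "fst c" "fst x" "fst c'" "fst y"] coord[of "snd c" "snd x" "snd c'" "snd y"] assms(2,3)
    by (simp add: mem_tile algebra_simps)
  with assms(1) show ?thesis by (simp add: grid_dist_def grid_adj_def)
qed

lemma l_TS_le_tiles:
  assumes "0 < n" "0 < k" "V \<subseteq> square (k * n)"
  shows "l_TS V \<le> (\<Sum>t<k * k. l_TS (V \<inter> tile n (snake k t))) + (k * k - 1) * (3 * n)"
proof -
  have "k * k = Suc (k * k - 1)" using assms(2) by simp
  then have atMost: "{..k * k - 1} = {..<k * k}" by (metis lessThan_Suc_atMost)
  have "V \<subseteq> (\<Union>t\<le>k * k - 1. tile n (snake k t))"
    using assms(3) square_subset_tiles[OF assms(1), of k] square_subset_snake_image[of k]
    unfolding atMost by blast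
  from l_TS_le_blocks[OF _ this] show ?thesis
    using tile_nonempty[OF assms(1)] grid_dist_adjacent_tiles[OF snake_adj[OF assms(2)]]
      finite_subset[OF assms(3)] unfolding atMost by auto
qed

lemma integrable_Pi_pmf_finite:
  fixes f :: "('a \<Rightarrow> 'b::finite) \<Rightarrow> real"
  assumes "finite A"
  shows "integrable (measure_pmf (Pi_pmf A d P)) f"
proof (rule integrable_measure_pmf_finite)
  show "finite (set_pmf (Pi_pmf A d P))"
    by (rule finite_subset[OF set_Pi_pmf_subset'[OF assms]]) (auto intro: assms)
qed

lemma expectation_Pi_pmf_restrict:
  fixes F :: "'a set \<Rightarrow> real"
  assumes "finite S" "A \<subseteq> S"
  shows "measure_pmf.expectation (Pi_pmf S False P) (\<lambda>\<omega>. F {x \<in> A. \<omega> x}) =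
         measure_pmf.expectation (Pi_pmf A False P) (\<lambda>\<omega>. F {x \<in> A. \<omega> x})"
proof -
  have "{x \<in> A. if x \<in> A then \<omega> x else False} = {x \<in> A. \<omega> x}" for \<omega> :: "'a \<Rightarrow> bool"
    by auto
  then show ?thesis by (simp add: Pi_pmf_subset[OF assms] integral_map_pmf)
qed

lemma expectation_Pi_pmf_image:
  fixes F :: "'b set \<Rightarrow> real" and h :: "'a \<Rightarrow> 'b"
  assumes "finite A" "inj h"
  shows "measure_pmf.expectation (Pi_pmf (h ` A) False (\<lambda>_. q)) (\<lambda>\<omega>. F {y \<in> h ` A. \<omega> y}) =
         measure_pmf.expectation (Pi_pmf A False (\<lambda>_. q)) (\<lambda>\<omega>. F (h ` {x \<in> A. \<omega> x}))"
proof -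
  have "Pi_pmf A False (\<lambda>_. q) = map_pmf (\<lambda>g. g \<circ> h) (Pi_pmf (h ` A) False (\<lambda>_. q))"
    using assms by (intro Pi_pmf_bij_betw) (auto simp: bij_betw_def inj_on_def inj_def)
  moreover have "h ` {x \<in> A. \<omega> (h x)} = {y \<in> h ` A. \<omega> y}" for \<omega> by auto
  ultimately show ?thesis by (simp add: integral_map_pmf)
qed

definition expected_l_TS :: "real \<Rightarrow> nat \<Rightarrow> real" where
  "expected_l_TS p n = measure_pmf.expectation (perc p n) (\<lambda>\<omega>. real (l_TS (D_set n \<omega>)))"

lemma expected_l_TS_nonneg: "0 \<le> expected_l_TS p n"
  unfolding expected_l_TS_def by simp

lemma expected_l_TS_tile:
  assumes "c \<in> square k"
  shows "measure_pmf.expectation (perc p (k * n)) (\<lambda>\<omega>. real (l_TS (D_set (k * n) \<omega> \<inter> tile n c)))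
           = expected_l_TS p n"
proof -
  let ?shift = "\<lambda>x. x + (int n * fst c, int n * snd c)"
  have sub: "tile n c \<subseteq> square (k * n)" by (rule tile_subset_square[OF assms])
  then have "D_set (k * n) \<omega> \<inter> tile n c = {x \<in> tile n c. \<omega> x}" for \<omega>
    by (auto simp: D_set_def)
  then have "measure_pmf.expectation (perc p (k * n)) (\<lambda>\<omega>. real (l_TS (D_set (k * n) \<omega> \<inter> tile n c)))
      = measure_pmf.expectation (Pi_pmf (square (k * n)) False (\<lambda>_. bernoulli_pmf p))
          (\<lambda>\<omega>. real (l_TS {x \<in> tile n c. \<omega> x}))"
    by (simp add: perc_def)
  also have "\<dots> = measure_pmf.expectation (Pi_pmf (tile n c) False (\<lambda>_. bernoulli_pmf p))
          (\<lambda>\<omega>. real (l_TS {x \<in> tile n c. \<omega> x}))"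
    by (rule expectation_Pi_pmf_restrict[OF finite_square sub])
  also have "\<dots> = measure_pmf.expectation (Pi_pmf (square n) False (\<lambda>_. bernoulli_pmf p))
          (\<lambda>\<omega>. real (l_TS (?shift ` {x \<in> square n. \<omega> x})))"
    unfolding tile_def by (rule expectation_Pi_pmf_image) (auto simp: inj_def)
  also have "\<dots> = expected_l_TS p n"
    by (simp add: l_TS_translate expected_l_TS_def perc_def D_set_def)
  finally show ?thesis .
qed

lemma expected_l_TS_tiling:
  assumes "0 < n" "0 < k"
  shows "expected_l_TS p (k * n) \<le> real k ^ 2 * (expected_l_TS p n + 3 * real n)"
proof -
  let ?E = "measure_pmf.expectation (perc p (k * n))"
  let ?L = "\<lambda>t \<omega>. real (l_TS (D_set (k * n) \<omega> \<inter> tile n (snake k t)))"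
  have int: "integrable (measure_pmf (perc p (k * n))) f" for f :: "_ \<Rightarrow> real"
    unfolding perc_def by (rule integrable_Pi_pmf_finite[OF finite_square])
  have "real (l_TS (D_set (k * n) \<omega>)) \<le> (\<Sum>t<k * k. ?L t \<omega>) + real (k * k) * (3 * real n)" for \<omega>
  proof -
    have "l_TS (D_set (k * n) \<omega>) \<le> (\<Sum>t<k * k. l_TS (D_set (k * n) \<omega> \<inter> tile n (snake k t)))
        + (k * k - 1) * (3 * n)"
      by (rule l_TS_le_tiles[OF assms]) (auto simp: D_set_def)
    also have "\<dots> \<le> (\<Sum>t<k * k. l_TS (D_set (k * n) \<omega> \<inter> tile n (snake k t))) + (k * k) * (3 * n)"
      by simp
    finally have "real (l_TS (D_set (k * n) \<omega>)) \<le>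
        real ((\<Sum>t<k * k. l_TS (D_set (k * n) \<omega> \<inter> tile n (snake k t))) + (k * k) * (3 * n))"
      by (rule of_nat_mono)
    then show ?thesis by simp
  qed
  then have "expected_l_TS p (k * n) \<le> ?E (\<lambda>\<omega>. (\<Sum>t<k * k. ?L t \<omega>) + real (k * k) * (3 * real n))"
    unfolding expected_l_TS_def by (intro integral_mono int)
  also have "\<dots> = (\<Sum>t<k * k. ?E (?L t)) + real (k * k) * (3 * real n)"
    by (simp add: int Bochner_Integration.integral_sum)
  also have "\<dots> = real k ^ 2 * (expected_l_TS p n + 3 * real n)"
    by (simp add: expected_l_TS_tile snake_in_square power2_eq_square algebra_simps)
  finally show ?thesis .
qed

lemma expected_l_TS_mono:
  assumes "N \<le> M"
  shows "expected_l_TS p N \<le> expected_l_TS p M"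
proof -
  have sub: "square N \<subseteq> square M" using assms by (auto simp: square_def)
  have "expected_l_TS p N = measure_pmf.expectation (perc p M) (\<lambda>\<omega>. real (l_TS {x \<in> square N. \<omega> x}))"
    unfolding expected_l_TS_def perc_def D_set_def
    by (rule expectation_Pi_pmf_restrict[OF finite_square sub, symmetric])
  also have "\<dots> \<le> expected_l_TS p M"
    unfolding expected_l_TS_def perc_def
  proof (rule integral_mono[OF integrable_Pi_pmf_finite integrable_Pi_pmf_finite])
    show "real (l_TS {x \<in> square N. \<omega> x}) \<le> real (l_TS (D_set M \<omega>))" for \<omega>
      using sub by (auto simp: D_set_def intro!: l_TS_mono)
  qed simp_all
  finally show ?thesis .
qed

lemma expected_l_TS_lower:
  assumes "0 \<le> p" "p \<le> 1"
  shows "p * real n ^ 2 - 1 \<le> expected_l_TS p n"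
proof -
  let ?P = "Pi_pmf (square n) False (\<lambda>_. bernoulli_pmf p)"
  have int: "integrable (measure_pmf ?P) f" for f :: "_ \<Rightarrow> real"
    by (rule integrable_Pi_pmf_finite[OF finite_square])
  have coord: "measure_pmf.expectation ?P (\<lambda>\<omega>. of_bool (\<omega> x)) = p" if "x \<in> square n" for x
  proof -
    have "measure_pmf.expectation ?P (\<lambda>\<omega>. of_bool (\<omega> x) :: real) =
        measure_pmf.expectation (map_pmf (\<lambda>f. f x) ?P) of_bool"
      by (simp add: integral_map_pmf)
    also have "\<dots> = p" using assms that by (simp add: Pi_pmf_component)
    finally show ?thesis .
  qed
  have count: "(\<Sum>x\<in>square n. of_bool (\<omega> x)) - 1 \<le> real (l_TS (D_set n \<omega>))" for \<omega>
  proof -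
    have "(\<Sum>x\<in>square n. of_bool (\<omega> x) :: real) = real (card (D_set n \<omega>))"
      by (simp add: D_set_def Int_def conj_commute)
    with card_le_l_TS[of "D_set n \<omega>"] show ?thesis by (simp add: D_set_def)
  qed
  have "(\<Sum>x\<in>square n. measure_pmf.expectation ?P (\<lambda>\<omega>. of_bool (\<omega> x))) = (\<Sum>x\<in>square n. p)"
    by (rule sum.cong) (simp_all add: coord)
  then have "p * real n ^ 2 - 1 = (\<Sum>x\<in>square n. measure_pmf.expectation ?P (\<lambda>\<omega>. of_bool (\<omega> x))) - 1"
    by (simp add: square_def card_cartesian_product power2_eq_square)
  also have "\<dots> = measure_pmf.expectation ?P (\<lambda>\<omega>. (\<Sum>x\<in>square n. of_bool (\<omega> x)) - 1)"
    by (simp add: int Bochner_Integration.integral_sum del: sum_of_bool_eq)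
  also have "\<dots> \<le> expected_l_TS p n"
    unfolding expected_l_TS_def perc_def by (rule integral_mono[OF int int count])
  finally show ?thesis .
qed

lemma expected_l_TS_rescale:
  assumes "1 \<le> N" "1 \<le> n"
  shows "expected_l_TS p N / real N ^ 2 \<le>
           ((real N + real n) / real N) ^ 2 * (expected_l_TS p n / real n ^ 2 + 3 / real n)"
proof -
  define k where "k = (N + n - 1) div n"
  have "k * n + (N + n - 1) mod n = N + n - 1" unfolding k_def by (rule div_mult_mod_eq)
  moreover have "(N + n - 1) mod n < n" using assms by simp
  ultimately have kn: "N \<le> k * n" "k * n \<le> N + n" using assms by linarith+
  then have "0 < k" using assms by (cases k) auto
  define b where "b = expected_l_TS p n / real n ^ 2 + 3 / real n"
  have "0 \<le> b" by (simp add: b_def expected_l_TS_nonneg)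
  have "expected_l_TS p N \<le> expected_l_TS p (k * n)" by (rule expected_l_TS_mono[OF kn(1)])
  also have "\<dots> \<le> real k ^ 2 * (expected_l_TS p n + 3 * real n)"
    using assms \<open>0 < k\<close> by (intro expected_l_TS_tiling) auto
  also have "\<dots> = (real k * real n) ^ 2 * b"
    using assms by (simp add: b_def field_simps power2_eq_square)
  also have "\<dots> \<le> (real N + real n) ^ 2 * b"
    using kn(2) \<open>0 \<le> b\<close> by (intro mult_right_mono power_mono) (simp_all flip: of_nat_mult of_nat_add)
  finally have "expected_l_TS p N / real N ^ 2 \<le> (real N + real n) ^ 2 * b / real N ^ 2"
    by (simp add: divide_right_mono)
  then show ?thesis by (simp add: b_def power_divide)
qed

lemma LIMSEQ_INF_of_rescaling_bound:
  fixes a :: "nat \<Rightarrow> real"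
  assumes nonneg: "\<And>n. 0 \<le> a n" "0 \<le> c"
    and bound: "\<And>N n. 1 \<le> N \<Longrightarrow> 1 \<le> n \<Longrightarrow>
                  a N \<le> ((real N + real n) / real N) ^ 2 * (a n + c / real n)"
  shows "a \<longlonglongrightarrow> (INF n\<in>{1..}. a n + c / real n)"
proof -
  define b where "b n = a n + c / real n" for n
  define \<alpha> where "\<alpha> = (INF n\<in>{1..}. b n)"
  have bdd: "bdd_below (b ` {1..})" using nonneg by (intro bdd_belowI[of _ 0]) (auto simp: b_def)
  have "a \<longlonglongrightarrow> \<alpha>"
  proof (rule order_tendstoI)
    fix y assume "y < \<alpha>"
    moreover have "(\<lambda>N. \<alpha> - c / real N) \<longlonglongrightarrow> \<alpha> - 0"
      by (intro tendsto_diff tendsto_const lim_const_over_n)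
    ultimately have "eventually (\<lambda>N. y < \<alpha> - c / real N) sequentially"
      by (intro order_tendstoD(1)) auto
    then show "eventually (\<lambda>N. y < a N) sequentially"
      using eventually_ge_at_top[of "1::nat"]
    proof eventually_elim
      case (elim N)
      with cINF_lower[OF bdd, of N] show ?case by (simp add: \<alpha>_def b_def)
    qed
  next
    fix y assume "\<alpha> < y"
    then obtain n where n: "1 \<le> n" "b n < y"
      using cINF_less_iff[OF _ bdd] by (auto simp: \<alpha>_def)
    have "(\<lambda>N. (1 + real n / real N) ^ 2 * b n) \<longlonglongrightarrow> (1 + 0) ^ 2 * b n"
      by (intro tendsto_intros lim_const_over_n)
    with n(2) have "eventually (\<lambda>N. (1 + real n / real N) ^ 2 * b n < y) sequentially"
      by (intro order_tendstoD(2)) auto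
    then show "eventually (\<lambda>N. a N < y) sequentially"
      using eventually_ge_at_top[of "1::nat"]
    proof eventually_elim
      case (elim N)
      then have "(real N + real n) / real N = 1 + real n / real N" by (simp add: field_simps)
      with elim bound[OF elim(2) n(1)] show ?case by (simp add: b_def)
    qed
  qed
  then show ?thesis by (simp add: \<alpha>_def b_def)
qed

theorem lemma2p3:
  fixes p :: real
  assumes "0 < p" and "p < 1"
  shows "\<exists>\<alpha>::real. \<alpha> > 0 \<and>
    ((\<lambda>n::nat. measure_pmf.expectation (perc p n) (\<lambda>\<omega>. real (l_TS (D_set n \<omega>)))
        / (real n)^2) \<longlongrightarrow> \<alpha>) sequentially"
proof -
  define b where "b n = expected_l_TS p n / real n ^ 2 + 3 / real n" for n
  have "(\<lambda>n. expected_l_TS p n / real n ^ 2) \<longlonglongrightarrow> (INF n\<in>{1..}. b n)"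
    unfolding b_def
    by (rule LIMSEQ_INF_of_rescaling_bound) (simp_all add: expected_l_TS_nonneg expected_l_TS_rescale)
  moreover have "p \<le> b n" if "1 \<le> n" for n
  proof -
    have "(p * real n ^ 2 - 1) / real n ^ 2 \<le> expected_l_TS p n / real n ^ 2"
      using expected_l_TS_lower[of p n] assms by (simp add: divide_right_mono)
    moreover have "(p * real n ^ 2 - 1) / real n ^ 2 = p - 1 / real n ^ 2"
      using that by (simp add: field_simps)
    moreover have "1 / real n ^ 2 \<le> 3 / real n"
      using that by (simp add: field_simps power2_eq_square)
    ultimately show ?thesis by (simp add: b_def)
  qed
  then have "p \<le> (INF n\<in>{1..}. b n)" by (intro cINF_greatest) auto
  ultimately show ?thesis
    using assms unfolding expected_l_TS_def by (intro exI[of _ "INF n\<in>{1..}. b n"]) auto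
qed

end
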